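(* For every integer $n\ge1$, the proportion $P(0,n)$ of invertible matrices in $(\mathbb F_2)^{n\times n}$ satisfies $$P(0,n)>2^{-8/7}e^{-19/42}.$$
   Context: $P(d,n)$ denotes the proportion of matrices in $(\mathbb F_2)^{n\times n}$ whose null space has dimension $d$. *)

theory Defs
  imports "HOL-Analysis.Analysis" "HOL-Library.Z2"
begin

text \<open>F_2 is the field type bit. n x n matrices over F_2 are bit^'n^'n with n = CARD('n).\<close>

definition P :: "nat \<Rightarrow> 'n::finite itself \<Rightarrow> real" where
  "P d _ = real (card {A :: bit^'n^'n. vec.dim {x. A *v x = 0} = d})
           / real (card (UNIV :: (bit^'n^'n) set))"

end

theory Submission
  imports Defs
begin

text \<open>A square matrix over F_2 has trivial null space iff its columns form an injective family
  with linearly independent image. Choosing the columns one at a time, the k-th column must avoid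
  the span of the previous ones, which has 2^k elements; hence
  P(0,n) = (1 - 1/2)(1 - 1/4)...(1 - 1/2^n). This product decreases in n, and by the Weierstrass
  product inequality all factors beyond the sixth together cost at most a factor 1 - 1/64, so
  P(0,n) >= P(0,6) * 63/64 > 0.2887. On the other side 2^(-8/7) < 0.4529 (compare seventh powers)
  and e^(-19/42) < 0.6365 (degree-four Taylor polynomial of e^(19/42)), and
  0.4529 * 0.6365 < 0.2887.\<close>

context vector_space
begin

lemma card_span_insert:
  assumes "a \<notin> span S"
  shows "card (span (insert a S)) = CARD('a) * card (span S)"
proof -
  let ?g = "\<lambda>(c, y). c *s a + y"
  have "span (insert a S) = ?g ` (UNIV \<times> span S)"
  proof (intro equalityI subsetI)
    fix x assume "x \<in> span (insert a S)"
    then obtain k where "x - k *s a \<in> span S"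
      by (auto simp: span_breakdown_eq)
    then show "x \<in> ?g ` (UNIV \<times> span S)"
      by (intro image_eqI[of _ _ "(k, x - k *s a)"]) auto
  next
    fix x assume "x \<in> ?g ` (UNIV \<times> span S)"
    then obtain c y where "x = c *s a + y" "y \<in> span S"
      by auto
    then show "x \<in> span (insert a S)"
      unfolding span_breakdown_eq by (intro exI[of _ c]) simp
  qed
  moreover have "inj_on ?g (UNIV \<times> span S)"
  proof (rule inj_onI, clarify)
    fix c y c' y'
    assume y: "y \<in> span S" and y': "y' \<in> span S" and eq: "c *s a + y = c' *s a + y'"
    have "(c - c') *s a = y' - y"
      using eq by (simp add: scale_left_diff_distrib algebra_simps)
    then have "(c - c') *s a \<in> span S"
      using span_diff[OF y' y] by simp
    have "c = c'"
    proof (rule ccontr)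
      assume "c \<noteq> c'"
      then have "scale (inverse (c - c')) (scale (c - c') a) = a"
        by simp
      then show False
        using assms span_scale[OF \<open>(c - c') *s a \<in> span S\<close>, of "inverse (c - c')"] by simp
    qed
    with eq show "c = c' \<and> y = y'" by simp
  qed
  ultimately show ?thesis
    by (simp add: card_image card_cartesian_product)
qed

lemma card_span_independent:
  assumes "finite S" "independent S"
  shows "card (span S) = CARD('a) ^ card S"
  using assms
proof (induction S rule: finite_induct)
  case (insert a S)
  then have "independent S" "a \<notin> span S"
    by (auto simp: independent_insert)
  with insert show ?case
    by (simp add: card_span_insert)
qed simp

lemma independent_family_iff:
  assumes "finite I"
  shows "(\<forall>c. (\<Sum>i\<in>I. c i *s f i) = 0 \<longrightarrow> (\<forall>i\<in>I. c i = 0)) \<longleftrightarrow>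
         inj_on f I \<and> independent (f ` I)"
proof
  assume indep: "\<forall>c. (\<Sum>i\<in>I. c i *s f i) = 0 \<longrightarrow> (\<forall>i\<in>I. c i = 0)"
  have "inj_on f I"
  proof (rule inj_onI, rule ccontr)
    fix i j assume "i \<in> I" "j \<in> I" "f i = f j" "i \<noteq> j"
    let ?c = "\<lambda>k. (if k = i then 1 else 0) - (if k = j then 1 else 0)"
    have scale_if: "scale (if P then 1 else 0) v = (if P then v else 0)" for P v
      by simp
    have "(\<Sum>k\<in>I. ?c k *s f k) = 0"
      using assms \<open>i \<in> I\<close> \<open>j \<in> I\<close> \<open>f i = f j\<close>
      by (simp add: scale_left_diff_distrib sum_subtractf scale_if)
    with indep \<open>i \<in> I\<close> \<open>i \<noteq> j\<close> show False by force
  qed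
  moreover have "independent (f ` I)"
  proof
    assume "dependent (f ` I)"
    then obtain u where u: "\<exists>v\<in>f ` I. u v \<noteq> 0" "(\<Sum>v\<in>f ` I. u v *s v) = 0"
      using assms by (auto simp: dependent_finite)
    then have "(\<Sum>i\<in>I. u (f i) *s f i) = 0"
      using \<open>inj_on f I\<close> by (simp add: sum.reindex)
    with indep u(1) show False by auto
  qed
  ultimately show "inj_on f I \<and> independent (f ` I)" ..
next
  assume inj_indep: "inj_on f I \<and> independent (f ` I)"
  show "\<forall>c. (\<Sum>i\<in>I. c i *s f i) = 0 \<longrightarrow> (\<forall>i\<in>I. c i = 0)"
  proof (intro allI impI ballI)
    fix c i assume sum0: "(\<Sum>i\<in>I. c i *s f i) = 0" and "i \<in> I"
    let ?u = "\<lambda>v. c (inv_into I f v)"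
    show "c i = 0"
    proof (rule ccontr)
      assume "c i \<noteq> 0"
      then have "?u (f i) \<noteq> 0"
        using inj_indep \<open>i \<in> I\<close> by simp
      moreover have "(\<Sum>v\<in>f ` I. ?u v *s v) = 0"
        using inj_indep sum0 by (simp add: sum.reindex)
      ultimately have "dependent (f ` I)"
        unfolding dependent_finite[OF finite_imageI[OF assms]]
        using \<open>i \<in> I\<close> by (intro exI[of _ ?u]) auto
      with inj_indep show False by simp
    qed
  qed
qed

lemma independent_image_insert:
  assumes "a \<notin> I"
  shows "inj_on f (insert a I) \<and> independent (f ` insert a I) \<longleftrightarrow>
         inj_on f I \<and> independent (f ` I) \<and> f a \<notin> span (f ` I)"
  using assms by (auto simp: independent_insert span_base)

text \<open>The global interpretation \<open>real_vector?\<close> of this locale also exports a constant named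
  \<open>independent_families\<close>, hence the explicit \<open>local.\<close> below.\<close>

definition independent_families :: "'i set \<Rightarrow> ('i \<Rightarrow> 'b) set" where
  "independent_families I = {f \<in> I \<rightarrow>\<^sub>E UNIV. inj_on f I \<and> independent (f ` I)}"

lemma independent_families_insert:
  assumes "a \<notin> I"
  shows "local.independent_families (insert a I) =
         (\<lambda>(f, v). f(a := v)) ` (SIGMA f:local.independent_families I. UNIV - span (f ` I))"
proof (intro equalityI subsetI)
  fix g assume g: "g \<in> local.independent_families (insert a I)"
  let ?f = "g(a := undefined)"
  have "?f ` I = g ` I" "inj_on ?f I = inj_on g I"
    using assms by (auto intro!: inj_on_cong)
  then have "?f \<in> local.independent_families I" "g a \<notin> span (?f ` I)"
    using g assms independent_image_insert[of a I g]
    by (auto simp: independent_families_def fun_upd_in_PiE)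
  then show "g \<in> (\<lambda>(f, v). f(a := v)) ` (SIGMA f:local.independent_families I. UNIV - span (f ` I))"
    by (intro image_eqI[of _ _ "(?f, g a)"]) auto
next
  fix g assume "g \<in> (\<lambda>(f, v). f(a := v)) ` (SIGMA f:local.independent_families I. UNIV - span (f ` I))"
  then obtain f v where g: "g = f(a := v)" and f: "f \<in> local.independent_families I"
    and v: "v \<notin> span (f ` I)"
    by auto
  have "g ` I = f ` I" "inj_on g I = inj_on f I"
    using assms unfolding g by (auto intro!: inj_on_cong)
  then show "g \<in> local.independent_families (insert a I)"
    using f v assms independent_image_insert[of a I g]
    by (auto simp: independent_families_def g PiE_fun_upd)
qed

lemma card_independent_families:
  assumes "finite (UNIV :: 'b set)" "finite I"
  shows "card (local.independent_families I) = (\<Prod>k<card I. CARD('b) - CARD('a) ^ k)"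
  using assms(2)
proof (induction I rule: finite_induct)
  case (insert a I)
  let ?extend = "\<lambda>(f, v). f(a := v)"
  have "inj_on ?extend (SIGMA f:local.independent_families I. UNIV - span (f ` I))"
  proof (rule inj_onI, clarify)
    fix f v f' v'
    assume "f \<in> local.independent_families I" "f' \<in> local.independent_families I"
      and eq: "f(a := v) = f'(a := v')"
    then have "f a = f' a"
      using insert.hyps PiE_arb[of f I "\<lambda>_. UNIV" a] PiE_arb[of f' I "\<lambda>_. UNIV" a]
      by (simp add: independent_families_def)
    have "f = f'"
    proof
      fix x show "f x = f' x"
        using fun_cong[OF eq, of x] \<open>f a = f' a\<close> by (cases "x = a") simp_all
    qed
    moreover have "v = v'"
      using fun_cong[OF eq, of a] by simp
    ultimately show "f = f' \<and> v = v'" ..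
  qed
  moreover have "card (UNIV - span (f ` I)) = CARD('b) - CARD('a) ^ card I"
    if "f \<in> local.independent_families I" for f
  proof -
    have "card (span (f ` I)) = CARD('a) ^ card I"
      using that insert.hyps
      by (simp add: independent_families_def card_span_independent card_image)
    then show ?thesis
      using assms(1) by (simp add: card_Diff_subset rev_finite_subset[of UNIV])
  qed
  moreover have "finite (local.independent_families I)"
    using insert.hyps assms(1)
    by (auto simp: independent_families_def intro: finite_subset[OF _ finite_PiE])
  ultimately have "card (local.independent_families (insert a I)) =
                   card (local.independent_families I) * (CARD('b) - CARD('a) ^ card I)"
    using assms(1) insert.hyps by (simp add: independent_families_insert card_image card_SigmaI)
  with insert show ?case
    by simp
qed (simp add: independent_families_def independent_empty)

end

lemma null_space_trivial_iff_independent_columns: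
  fixes A :: "'a::field^'n^'m"
  shows "vec.dim {x. A *v x = 0} = 0 \<longleftrightarrow>
         inj (\<lambda>j. column j A) \<and> vec.independent (range (\<lambda>j. column j A))"
proof -
  have "vec.dim {x. A *v x = 0} = 0 \<longleftrightarrow> (\<exists>B :: 'a^'m^'n. B ** A = mat 1)"
    by (auto simp: matrix_left_invertible_ker)
  also have "\<dots> \<longleftrightarrow> (\<forall>c. (\<Sum>j\<in>UNIV. c j *s column j A) = 0 \<longrightarrow> (\<forall>j\<in>UNIV. c j = 0))"
    by (simp add: matrix_left_invertible_independent_columns)
  also have "\<dots> \<longleftrightarrow> inj (\<lambda>j. column j A) \<and> vec.independent (range (\<lambda>j. column j A))"
    by (rule vec.independent_family_iff) simp
  finally show ?thesis .
qed

lemma card_matrices_trivial_null_space: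
  "card {A :: ('a::{field,finite})^'n^'m. vec.dim {x. A *v x = 0} = 0} =
   (\<Prod>k<CARD('n). CARD('a) ^ CARD('m) - CARD('a) ^ k)"
proof -
  let ?independent = "\<lambda>f :: 'n \<Rightarrow> 'a^'m. inj f \<and> vec.independent (range f)"
  have "bij_betw (\<lambda>A j. column j A) {A. ?independent (\<lambda>j. column j A)} {f. ?independent f}"
    by (rule bij_betw_byWitness[where f' = "\<lambda>f. \<chi> i j. f j $ i"])
      (auto simp: column_def vec_eq_iff)
  then have "card {A :: 'a^'n^'m. ?independent (\<lambda>j. column j A)} = card {f. ?independent f}"
    by (rule bij_betw_same_card)
  also have "\<dots> = (\<Prod>k<CARD('n). CARD('a) ^ CARD('m) - CARD('a) ^ k)"
    using vec.card_independent_families[where 'a='a and 'b='m, of "UNIV :: 'n set"]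
    by (simp add: vec.independent_families_def)
  finally show ?thesis
    by (simp only: null_space_trivial_iff_independent_columns)
qed

lemma UNIV_bit: "(UNIV :: bit set) = {0, 1}"
  using bit.exhaust by auto

instance bit :: finite
  by standard (simp add: UNIV_bit)

lemma CARD_bit [simp]: "CARD(bit) = 2"
  by (simp add: UNIV_bit)

lemma P_0_eq_prod: "P 0 TYPE('n::finite) = (\<Prod>k<CARD('n). 1 - (1/2::real) ^ Suc k)"
proof -
  let ?n = "CARD('n)"
  have "real (\<Prod>k<?n. 2 ^ ?n - 2 ^ k :: nat) = (\<Prod>k<?n. (2::real) ^ ?n - 2 ^ k)"
    unfolding of_nat_prod by (rule prod.cong) (auto simp: of_nat_diff)
  then have "P 0 TYPE('n) = (\<Prod>k<?n. (2::real) ^ ?n - 2 ^ k) / (\<Prod>k<?n. 2 ^ ?n)"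
    unfolding P_def card_matrices_trivial_null_space by (simp add: power_mult)
  also have "\<dots> = (\<Prod>k<?n. ((2::real) ^ ?n - 2 ^ k) / 2 ^ ?n)"
    by (rule prod_dividef[symmetric])
  also have "\<dots> = (\<Prod>k<?n. 1 - (1/2::real) ^ Suc (?n - Suc k))"
  proof (rule prod.cong)
    fix k assume "k \<in> {..<?n}"
    then have "(2::real) ^ k / 2 ^ ?n = (1/2) ^ Suc (?n - Suc k)"
      by (simp add: power_diff power_one_over Suc_diff_Suc)
    then show "((2::real) ^ ?n - 2 ^ k) / 2 ^ ?n = 1 - (1/2) ^ Suc (?n - Suc k)"
      by (simp add: diff_divide_distrib)
  qed simp
  also have "\<dots> = (\<Prod>k<?n. 1 - (1/2::real) ^ Suc k)"
    by (rule prod.nat_diff_reindex)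
  finally show ?thesis .
qed

lemma sum_half_powers: "(\<Sum>k\<in>{m..<m + d}. (1/2::real) ^ Suc k) = (1/2) ^ m - (1/2) ^ (m + d)"
  by (induction d) simp_all

lemma prod_one_minus_half_powers_bounds:
  "(\<Prod>k<m. 1 - (1/2::real) ^ Suc k) * (1 - (1/2) ^ m) \<le> (\<Prod>k<m + d. 1 - (1/2::real) ^ Suc k)"
  "(\<Prod>k<m + d. 1 - (1/2::real) ^ Suc k) \<le> (\<Prod>k<m. 1 - (1/2::real) ^ Suc k)"
proof -
  let ?f = "\<lambda>k. 1 - (1/2::real) ^ Suc k"
  have factor_bounds: "0 \<le> ?f k \<and> ?f k \<le> 1" for k
    using power_le_one[of "1/2::real" "Suc k"] by simp
  have split: "prod ?f {..<m + d} = prod ?f {..<m} * prod ?f {m..<m + d}"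
    by (simp add: atLeast0LessThan[symmetric] prod.atLeastLessThan_concat)
  have "1 - (1/2) ^ m \<le> 1 - (\<Sum>k\<in>{m..<m + d}. (1/2::real) ^ Suc k)"
    unfolding sum_half_powers by simp
  also have "\<dots> \<le> prod ?f {m..<m + d}"
    by (rule Weierstrass_prod_ineq) (use factor_bounds in auto)
  finally have "prod ?f {..<m} * (1 - (1/2) ^ m) \<le> prod ?f {..<m} * prod ?f {m..<m + d}"
    using factor_bounds by (intro mult_left_mono prod_nonneg) auto
  then show "prod ?f {..<m} * (1 - (1/2) ^ m) \<le> prod ?f {..<m + d}"
    by (simp only: split)
  have "prod ?f {..<m} * prod ?f {m..<m + d} \<le> prod ?f {..<m}"
    using factor_bounds by (intro mult_right_le_one_le prod_nonneg prod_le_1) auto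
  then show "prod ?f {..<m + d} \<le> prod ?f {..<m}"
    by (simp only: split)
qed

lemma prod_one_minus_half_powers_gt: "2887/10000 < (\<Prod>k<n. 1 - (1/2::real) ^ Suc k)"
proof -
  let ?Q = "\<lambda>n. \<Prod>k<n. 1 - (1/2::real) ^ Suc k"
  have Q_6: "?Q 6 = 615195/2097152"
    by (simp add: numeral_eq_Suc)
  have "2887/10000 < ?Q 6 * (1 - (1/2) ^ 6)"
    unfolding Q_6 by (simp add: power_divide)
  also have "\<dots> \<le> ?Q n"
  proof (cases "6 \<le> n")
    case True
    then obtain d where "n = 6 + d"
      using le_Suc_ex by blast
    then show ?thesis
      using prod_one_minus_half_powers_bounds(1)[of 6 d] by simp
  next
    case False
    then obtain d where "6 = n + d"
      using le_Suc_ex[of n 6] by auto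
    then have "?Q 6 \<le> ?Q n"
      using prod_one_minus_half_powers_bounds(2)[of n d] by simp
    moreover have "?Q 6 * (1 - (1/2) ^ 6) \<le> ?Q 6"
      unfolding Q_6 by simp
    ultimately show ?thesis
      by linarith
  qed
  finally show ?thesis .
qed

lemma exp_ge_partial_sum:
  fixes x :: real
  assumes "0 \<le> x"
  shows "(\<Sum>k<n. x ^ k / fact k) \<le> exp x"
proof -
  have "(\<Sum>k<n. x ^ k / fact k) \<le> (\<Sum>k. x ^ k / fact k)"
    using assms summable_exp[of x] by (intro sum_le_suminf) (simp_all add: field_simps)
  then show ?thesis
    by (simp add: exp_def scaleR_conv_of_real field_simps)
qed

lemma exp_neg_19_42_le: "exp (-19/42 :: real) \<le> 6365/10000"
proof -
  have "10000/6365 \<le> (\<Sum>k<5. (19/42::real) ^ k / fact k)"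
    by (simp add: numeral_eq_Suc fact_numeral power_divide)
  also have "\<dots> \<le> exp (19/42)"
    by (rule exp_ge_partial_sum) simp
  finally have "inverse (exp (19/42 :: real)) \<le> 6365/10000"
    using le_imp_inverse_le[of "10000/6365"] by fastforce
  then show ?thesis
    by (simp add: exp_minus[symmetric])
qed

lemma two_powr_neg_8_7_less: "2 powr (-8/7 :: real) < 4529/10000"
proof -
  have "(2 powr (-8/7 :: real)) ^ 7 = 2 powr (-8)"
    by (simp add: powr_realpow[symmetric] powr_powr)
  also have "\<dots> = 1/256"
    by (simp add: powr_minus powr_realpow)
  also have "\<dots> < (4529/10000) ^ 7"
    by (simp add: power_divide)
  finally show ?thesis
    by (rule power_less_imp_less_base) simp
qed

theorem mainTheorem11:
  shows "P 0 TYPE('n::finite) > 2 powr (-8/7) * exp (-19/42)"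
proof -
  have "2 powr (-8/7) * exp (-19/42) \<le> (4529/10000) * (6365/10000 :: real)"
    using two_powr_neg_8_7_less exp_neg_19_42_le by (intro mult_mono) auto
  also have "\<dots> < 2887/10000"
    by simp
  also have "\<dots> < (\<Prod>k<CARD('n). 1 - (1/2::real) ^ Suc k)"
    by (rule prod_one_minus_half_powers_gt)
  also have "\<dots> = P 0 TYPE('n)"
    by (rule P_0_eq_prod[symmetric])
  finally show ?thesis .
qed

end
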